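(* Let $x_1,x_2,x_3>0$, $\gamma,\delta>0$ with $\gamma\ne1\ne\delta$, and let $$\mathbf{Q}=\begin{pmatrix}1&\delta x_1&x_2&x_3\\ 1/(\delta x_1)&1&x_2/x_1&x_3/x_1\\ 1/x_2&x_1/x_2&1&\gamma x_3/x_2\\ 1/x_3&x_1/x_3&x_2/(\gamma x_3)&1\end{pmatrix}$$ with principal right eigenvector $\mathbf{w}^{EM}$. If $\delta>1$ and $\gamma<1$, then $w_1^{EM}/w_3^{EM}>x_2$.
   Context: The principal right eigenvector is the positive (Perron) eigenvector belonging to the largest eigenvalue. *)

theory Defs
  imports "Jordan_Normal_Form.Char_Poly"
begin

text \<open>The 4x4 matrix Q of the theorem (indices 0..3 correspond to 1..4 of the paper).\<close>
definition Qmat :: "real \<Rightarrow> real \<Rightarrow> real \<Rightarrow> real \<Rightarrow> real \<Rightarrow> real mat" where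
  "Qmat x1 x2 x3 \<gamma> \<delta> = mat_of_rows_list 4
     [[1, \<delta> * x1, x2, x3],
      [1 / (\<delta> * x1), 1, x2 / x1, x3 / x1],
      [1 / x2, x1 / x2, 1, \<gamma> * x3 / x2],
      [1 / x3, x1 / x3, x2 / (\<gamma> * x3), 1]]"

definition principal_right_eigenvector :: "real mat \<Rightarrow> real vec \<Rightarrow> bool" where
  "principal_right_eigenvector A w \<longleftrightarrow>
     (\<exists>r. eigenvector A w r \<and> (\<forall>m. eigenvalue A m \<longrightarrow> m \<le> r)) \<and>
     (\<forall>i < dim_vec w. w $ i > 0)"

end

theory Submission
  imports Defs
begin

text \<open>Subtracting x2 times the third row of Q w = r w from the first row, the terms in w1 and w3
  cancel on the right and only the perturbations \<delta> and \<gamma> survive: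
  r (w1 - x2 w3) = (\<delta> - 1) x1 w2 + (1 - \<gamma>) x3 w4.
  The right-hand side is positive when \<delta> > 1 > \<gamma> and w > 0, and so is r, since Q is positive.\<close>

lemma eigenvector_component:
  fixes A :: "'a :: comm_ring_1 mat"
  assumes "A \<in> carrier_mat n n" and "eigenvector A v r" and "i < n"
  shows "r * v $ i = (\<Sum>j<n. A $$ (i, j) * v $ j)"
proof -
  have v: "v \<in> carrier_vec n" and "A *\<^sub>v v = r \<cdot>\<^sub>v v"
    using assms unfolding eigenvector_def by auto
  then have "r * v $ i = row A i \<bullet> v"
    using assms by (metis index_mult_mat_vec index_smult_vec(1) carrier_vecD carrier_matD(1))
  also have "\<dots> = (\<Sum>j<n. A $$ (i, j) * v $ j)"
    using assms(1,3) v by (simp add: scalar_prod_def lessThan_atLeast0 mult.commute)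
  finally show ?thesis .
qed

lemma eigenvalue_pos_of_pos_eigenvector:
  fixes A :: "real mat"
  assumes "A \<in> carrier_mat n n" and "eigenvector A v r"
    and nonneg: "\<And>j. j < n \<Longrightarrow> A $$ (i, j) \<ge> 0"
    and diag: "A $$ (i, i) > 0" and "i < n"
    and pos: "\<And>j. j < n \<Longrightarrow> v $ j > 0"
  shows "r > 0"
proof -
  have "0 < A $$ (i, i) * v $ i"
    using diag pos \<open>i < n\<close> by simp
  also have "\<dots> \<le> (\<Sum>j<n. A $$ (i, j) * v $ j)"
    using \<open>i < n\<close> nonneg pos by (intro member_le_sum mult_nonneg_nonneg) (auto simp: less_imp_le)
  also have "\<dots> = r * v $ i"
    using eigenvector_component[OF assms(1,2) \<open>i < n\<close>] by simp
  finally show ?thesis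
    using pos[OF \<open>i < n\<close>] by (simp add: zero_less_mult_iff)
qed

lemma Qmat_carrier: "Qmat x1 x2 x3 \<gamma> \<delta> \<in> carrier_mat 4 4"
  by (simp add: Qmat_def mat_of_rows_list_def numeral_eq_Suc)

lemma Qmat_nonneg:
  assumes "x1 > 0" "x2 > 0" "x3 > 0" "\<gamma> > 0" "\<delta> > 0" "i < 4" "j < 4"
  shows "Qmat x1 x2 x3 \<gamma> \<delta> $$ (i, j) \<ge> 0"
proof -
  have "i \<in> {0, 1, 2, 3}" "j \<in> {0, 1, 2, 3}"
    using assms(6,7) by auto
  then show ?thesis
    using assms(1-5) by (auto simp: Qmat_def mat_of_rows_list_def)
qed

lemma sum_lessThan_4: "(\<Sum>j<(4::nat). f j) = f 0 + f 1 + f 2 + (f 3 :: 'a :: comm_monoid_add)"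
  by (simp add: numeral_eq_Suc add.assoc)

lemma Qmat_eigenvector_balance:
  assumes "eigenvector (Qmat x1 x2 x3 \<gamma> \<delta>) w r" and "x2 \<noteq> 0"
  shows "r * (w $ 0 - x2 * w $ 2) = (\<delta> - 1) * x1 * w $ 1 + (1 - \<gamma>) * x3 * w $ 3"
proof -
  note component = eigenvector_component[OF Qmat_carrier assms(1)]
  have "r * w $ 0 = w $ 0 + \<delta> * x1 * w $ 1 + x2 * w $ 2 + x3 * w $ 3"
    using component[of 0] by (simp add: sum_lessThan_4 Qmat_def mat_of_rows_list_def)
  moreover have "r * w $ 2 = w $ 0 / x2 + x1 / x2 * w $ 1 + w $ 2 + \<gamma> * x3 / x2 * w $ 3"
    using component[of 2] by (simp add: sum_lessThan_4 Qmat_def mat_of_rows_list_def)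
  ultimately show ?thesis
    using assms(2) by (simp add: field_simps)
qed

theorem mainTheorem12:
  fixes x1 x2 x3 \<gamma> \<delta> :: real and w :: "real vec"
  assumes "x1 > 0" "x2 > 0" "x3 > 0" "\<gamma> > 0" "\<delta> > 0" "\<gamma> \<noteq> 1" "\<delta> \<noteq> 1"
    and "principal_right_eigenvector (Qmat x1 x2 x3 \<gamma> \<delta>) w"
    and "\<delta> > 1" "\<gamma> < 1"
  shows "w $ 0 / w $ 2 > x2"
proof -
  obtain r where ev: "eigenvector (Qmat x1 x2 x3 \<gamma> \<delta>) w r"
    and pos: "\<And>i. i < dim_vec w \<Longrightarrow> w $ i > 0"
    using assms(8) unfolding principal_right_eigenvector_def by blast
  have "x2 \<noteq> 0"
    using assms(2) by simp
  have "dim_vec w = 4"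
    using ev carrier_matD(1)[OF Qmat_carrier] unfolding eigenvector_def by auto
  then have w_pos: "w $ 0 > 0" "w $ 1 > 0" "w $ 2 > 0" "w $ 3 > 0"
    using pos by auto
  have "r > 0"
    using eigenvalue_pos_of_pos_eigenvector[OF Qmat_carrier ev, of 0]
      Qmat_nonneg[OF assms(1-5), of 0] pos \<open>dim_vec w = 4\<close>
    by (simp add: Qmat_def mat_of_rows_list_def)
  moreover have "r * (w $ 0 - x2 * w $ 2) > 0"
    unfolding Qmat_eigenvector_balance[OF ev \<open>x2 \<noteq> 0\<close>]
    using w_pos assms by (intro add_pos_pos mult_pos_pos) auto
  ultimately have "w $ 0 - x2 * w $ 2 > 0"
    by (simp add: zero_less_mult_iff)
  then show ?thesis
    using w_pos(3) by (simp add: less_divide_eq)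
qed

end
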